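(* Let $N,L,Q$ be positive integers, let $V=\{v_1,\dots,v_N\}$, and let $t=(t_i(l))_{i\in[N],\,l\in[L]}$ be an arbitrary assignment with $t_i(l)\in[Q]\cup\{\emptyset\}$. Then $t$ is the natural labeling of some community structure $(V,\mathcal{C},\mathcal{S})$ with communities indexed by $[Q]$ that satisfies WPP if and only if $$\forall i,j\in[N],\ \forall l,k\in[L]:\quad \big(t_i(l)=t_j(k)\neq\emptyset\big)\ \Longrightarrow\ \big(t_i(k)=t_j(k)\big).$$
   Context: A community structure on $V$ with $L$ layers is a triple $(V,\mathcal{C},\mathcal{S})$ where $\mathcal{C}=\{C_1,\dots,C_Q\}$ is a family of pairwise distinct subsets $C_q\subseteq V$ (the communities, indexed by $q\in[Q]=\{1,\dots,Q\}$), and $\mathcal{S}=(S_1,\dots,S_L)$ with $S_l\subseteq\mathcal{C}$ the set of communities present in layer $l$. The triple satisfies the well partitioned property (WPP) if for every $l\in[L]$ and all $C_a,C_b\in S_l$, $C_a\cap C_b\neq\emptyset$ implies $C_a=C_b$ (i.e. $a=b$). For a triple satisfying WPP, its natural labeling is $t_i(l)=a$ if $v_i\in C_a$ and $C_a\in S_l$, and $t_i(l)=\emptyset$ if no such $a$ exists (well defined by WPP).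
   Formalization: The communities $C_1,\dots,C_Q$ are an arbitrary indexed family of subsets of V, without the requirement that they be pairwise distinct. The statement above fails without it. *)

theory Defs
  imports Main
begin

text \<open>Vertices v_1..v_N are represented by their indices 1..N; layers by 1..L;
community indices by [Q] = 1..Q. A community structure is given by
C :: nat => nat set (community q is C q, a subset of V) and
S :: nat => nat set (S l is the set of indices of communities present in layer l).
Labels: None stands for the empty label, Some a for label a.\<close>

definition community_structure ::
  "nat \<Rightarrow> nat \<Rightarrow> nat \<Rightarrow> (nat \<Rightarrow> nat set) \<Rightarrow> (nat \<Rightarrow> nat set) \<Rightarrow> bool" where
  "community_structure N L Q C S \<longleftrightarrow>
     (\<forall>q\<in>{1..Q}. C q \<subseteq> {1..N}) \<and> (\<forall>l\<in>{1..L}. S l \<subseteq> {1..Q})"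

definition wpp :: "nat \<Rightarrow> (nat \<Rightarrow> nat set) \<Rightarrow> (nat \<Rightarrow> nat set) \<Rightarrow> bool" where
  "wpp L C S \<longleftrightarrow>
     (\<forall>l\<in>{1..L}. \<forall>a\<in>S l. \<forall>b\<in>S l. C a \<inter> C b \<noteq> {} \<longrightarrow> a = b)"

definition natural_labeling ::
  "nat \<Rightarrow> nat \<Rightarrow> (nat \<Rightarrow> nat set) \<Rightarrow> (nat \<Rightarrow> nat set) \<Rightarrow> (nat \<Rightarrow> nat \<Rightarrow> nat option) \<Rightarrow> bool" where
  "natural_labeling N L C S t \<longleftrightarrow>
     (\<forall>i\<in>{1..N}. \<forall>l\<in>{1..L}.
        (\<forall>a. t i l = Some a \<longleftrightarrow> (i \<in> C a \<and> a \<in> S l)) \<and>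
        (t i l = None \<longleftrightarrow> \<not> (\<exists>a. i \<in> C a \<and> a \<in> S l)))"

end

theory Submission
  imports Defs
begin

text \<open>Necessity holds for any natural labeling: if t i l = t j k = a, then v_i lies in C_a and
C_a is present in layer k, so t i k = a. For sufficiency, read the structure off the labels:
C_a collects the vertices carrying label a in some layer, and S_l the labels used in layer l.
Consistency says precisely that a vertex of C_a is labeled a in every layer where C_a is present,
which gives both WPP and that t is the natural labeling.\<close>

definition consistent_labeling :: "nat \<Rightarrow> nat \<Rightarrow> (nat \<Rightarrow> nat \<Rightarrow> nat option) \<Rightarrow> bool" where
  "consistent_labeling N L t \<longleftrightarrow>
     (\<forall>i\<in>{1..N}. \<forall>j\<in>{1..N}. \<forall>l\<in>{1..L}. \<forall>k\<in>{1..L}.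
        (t i l = t j k \<and> t i l \<noteq> None) \<longrightarrow> t i k = t j k)"

definition label_community :: "nat \<Rightarrow> nat \<Rightarrow> (nat \<Rightarrow> nat \<Rightarrow> nat option) \<Rightarrow> nat \<Rightarrow> nat set" where
  "label_community N L t a = {i \<in> {1..N}. \<exists>l\<in>{1..L}. t i l = Some a}"

definition layer_labels :: "nat \<Rightarrow> (nat \<Rightarrow> nat \<Rightarrow> nat option) \<Rightarrow> nat \<Rightarrow> nat set" where
  "layer_labels N t l = {a. \<exists>i\<in>{1..N}. t i l = Some a}"

lemma natural_labeling_Some_iff:
  assumes "natural_labeling N L C S t" "i \<in> {1..N}" "l \<in> {1..L}"
  shows "t i l = Some a \<longleftrightarrow> i \<in> C a \<and> a \<in> S l"
  using assms unfolding natural_labeling_def by blast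

lemma natural_labeling_consistent:
  assumes "natural_labeling N L C S t"
  shows "consistent_labeling N L t"
  unfolding consistent_labeling_def
proof (intro ballI impI)
  fix i j l k
  assume ij: "i \<in> {1..N}" "j \<in> {1..N}" and lk: "l \<in> {1..L}" "k \<in> {1..L}"
    and same: "t i l = t j k \<and> t i l \<noteq> None"
  then obtain a where a: "t i l = Some a" "t j k = Some a" by (metis not_None_eq)
  have "i \<in> C a" using natural_labeling_Some_iff[OF assms ij(1) lk(1)] a(1) by blast
  moreover have "a \<in> S k" using natural_labeling_Some_iff[OF assms ij(2) lk(2)] a(2) by blast
  ultimately have "t i k = Some a" using natural_labeling_Some_iff[OF assms ij(1) lk(2)] by blast
  then show "t i k = t j k" using a(2) by simp
qed

lemma consistent_labeling_label_community:
  assumes "consistent_labeling N L t" "l \<in> {1..L}"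
    and "i \<in> label_community N L t a" "a \<in> layer_labels N t l"
  shows "t i l = Some a"
proof -
  obtain l' where "i \<in> {1..N}" "l' \<in> {1..L}" "t i l' = Some a"
    using assms(3) unfolding label_community_def by auto
  moreover obtain j where "j \<in> {1..N}" "t j l = Some a"
    using assms(4) unfolding layer_labels_def by auto
  ultimately show ?thesis
    using assms(1,2) unfolding consistent_labeling_def by (metis option.distinct(1))
qed

lemma community_structure_label_communities:
  assumes "\<forall>i\<in>{1..N}. \<forall>l\<in>{1..L}. t i l \<in> {None} \<union> Some ` {1..Q}"
  shows "community_structure N L Q (label_community N L t) (layer_labels N t)"
  using assms unfolding community_structure_def label_community_def layer_labels_def
  by fastforce

lemma wpp_label_communities:
  assumes "consistent_labeling N L t"
  shows "wpp L (label_community N L t) (layer_labels N t)"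
  unfolding wpp_def
proof (intro ballI impI)
  fix l a b
  assume "l \<in> {1..L}" "a \<in> layer_labels N t l" "b \<in> layer_labels N t l"
    and "label_community N L t a \<inter> label_community N L t b \<noteq> {}"
  then obtain i where "t i l = Some a" "t i l = Some b"
    using consistent_labeling_label_community[OF assms] by blast
  then show "a = b" by simp
qed

lemma natural_labeling_label_communities:
  assumes "consistent_labeling N L t"
  shows "natural_labeling N L (label_community N L t) (layer_labels N t) t"
proof -
  have Some_iff: "t i l = Some a \<longleftrightarrow> i \<in> label_community N L t a \<and> a \<in> layer_labels N t l"
    if "i \<in> {1..N}" "l \<in> {1..L}" for i l a
    using that consistent_labeling_label_community[OF assms that(2)]
    unfolding label_community_def layer_labels_def by blast
  then show ?thesis
    unfolding natural_labeling_def by (metis not_None_eq)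
qed

theorem theorem1:
  fixes N L Q :: nat and t :: "nat \<Rightarrow> nat \<Rightarrow> nat option"
  assumes "N > 0" and "L > 0" and "Q > 0"
    and "\<forall>i\<in>{1..N}. \<forall>l\<in>{1..L}. t i l \<in> {None} \<union> Some ` {1..Q}"
  shows "(\<exists>C S. community_structure N L Q C S \<and> wpp L C S \<and> natural_labeling N L C S t)
     \<longleftrightarrow> (\<forall>i\<in>{1..N}. \<forall>j\<in>{1..N}. \<forall>l\<in>{1..L}. \<forall>k\<in>{1..L}.
            (t i l = t j k \<and> t i l \<noteq> None) \<longrightarrow> t i k = t j k)"
  unfolding consistent_labeling_def[symmetric]
proof
  assume "\<exists>C S. community_structure N L Q C S \<and> wpp L C S \<and> natural_labeling N L C S t"
  then show "consistent_labeling N L t" using natural_labeling_consistent by blast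
next
  assume "consistent_labeling N L t"
  then show "\<exists>C S. community_structure N L Q C S \<and> wpp L C S \<and> natural_labeling N L C S t"
    using community_structure_label_communities[OF assms(4)]
      wpp_label_communities natural_labeling_label_communities by blast
qed

end
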